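(* Let $\mathfrak{g}$ be a real nilpotent Lie algebra with a (possibly indefinite) metric whose Ricci operator satisfies $\operatorname{Ric}=\lambda\,\mathrm{id}+D$ with $\lambda\in\mathbb{R}$ and $D$ a derivation of $\mathfrak{g}$. Then $\operatorname{Tr}D^2=-\lambda\operatorname{Tr}D$ and $\operatorname{Tr}\operatorname{Ric}^2=\lambda\operatorname{Tr}\operatorname{Ric}$.
   Context: A metric on a Lie algebra is a nondegenerate symmetric bilinear form, possibly indefinite. The Ricci operator is that of the corresponding left-invariant pseudo-Riemannian metric on the simply connected Lie group, evaluated at the identity. *)

theory Defs
  imports "HOL-Analysis.Analysis"
begin

definition lie_algebra :: "(real^'n \<Rightarrow> real^'n \<Rightarrow> real^'n) \<Rightarrow> bool" where
  "lie_algebra br \<longleftrightarrow> bilinear br \<and> (\<forall>x. br x x = 0) \<and>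
     (\<forall>x y z. br x (br y z) + br y (br z x) + br z (br x y) = 0)"

fun lower_central :: "(real^'n \<Rightarrow> real^'n \<Rightarrow> real^'n) \<Rightarrow> nat \<Rightarrow> (real^'n) set" where
  "lower_central br 0 = UNIV"
| "lower_central br (Suc k) = span {br x y | x y. y \<in> lower_central br k}"

definition nilpotent_lie :: "(real^'n \<Rightarrow> real^'n \<Rightarrow> real^'n) \<Rightarrow> bool" where
  "nilpotent_lie br \<longleftrightarrow> (\<exists>k. lower_central br k = {0})"

definition metric :: "(real^'n \<Rightarrow> real^'n \<Rightarrow> real) \<Rightarrow> bool" where
  "metric g \<longleftrightarrow> bilinear g \<and> (\<forall>x y. g x y = g y x) \<and> (\<forall>x. (\<forall>y. g x y = 0) \<longrightarrow> x = 0)"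

text \<open>Levi-Civita connection of the left-invariant metric (Koszul formula for left-invariant fields).\<close>
definition levi_civita :: "(real^'n \<Rightarrow> real^'n \<Rightarrow> real^'n) \<Rightarrow> (real^'n \<Rightarrow> real^'n \<Rightarrow> real)
     \<Rightarrow> real^'n \<Rightarrow> real^'n \<Rightarrow> real^'n" where
  "levi_civita br g X Y = (THE v. \<forall>Z. g v Z =
       (g (br X Y) Z - g (br Y Z) X + g (br Z X) Y) / 2)"

definition curvature :: "(real^'n \<Rightarrow> real^'n \<Rightarrow> real^'n) \<Rightarrow> (real^'n \<Rightarrow> real^'n \<Rightarrow> real)
     \<Rightarrow> real^'n \<Rightarrow> real^'n \<Rightarrow> real^'n \<Rightarrow> real^'n" where
  "curvature br g X Y Z = (let nb = levi_civita br g in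
       nb X (nb Y Z) - nb Y (nb X Z) - nb (br X Y) Z)"

definition tr :: "(real^'n \<Rightarrow> real^'n) \<Rightarrow> real" where
  "tr f = (\<Sum>i\<in>UNIV. f (axis i 1) $ i)"

definition ricci_tensor :: "(real^'n \<Rightarrow> real^'n \<Rightarrow> real^'n) \<Rightarrow> (real^'n \<Rightarrow> real^'n \<Rightarrow> real)
     \<Rightarrow> real^'n \<Rightarrow> real^'n \<Rightarrow> real" where
  "ricci_tensor br g Y Z = tr (\<lambda>X. curvature br g X Y Z)"

definition ricci_operator :: "(real^'n \<Rightarrow> real^'n \<Rightarrow> real^'n) \<Rightarrow> (real^'n \<Rightarrow> real^'n \<Rightarrow> real)
     \<Rightarrow> real^'n \<Rightarrow> real^'n" where
  "ricci_operator br g Y = (THE v. \<forall>Z. g v Z = ricci_tensor br g Y Z)"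

definition derivation :: "(real^'n \<Rightarrow> real^'n \<Rightarrow> real^'n) \<Rightarrow> (real^'n \<Rightarrow> real^'n) \<Rightarrow> bool" where
  "derivation br D \<longleftrightarrow> linear D \<and> (\<forall>x y. D (br x y) = br (D x) y + br x (D y))"

end

theory Submission
  imports Defs
begin

(* Let e_k be the standard basis and f_k its g-dual basis, g f_k z = z_k. Expanding the curvature
   with the Koszul formula gives, for every metric Lie algebra,
     ric(Y,Z) = 1/2 sum_k g([Z,f_k],[e_k,Y]) - 1/4 sum_k,m g([f_m,e_k],Z) g([f_k,e_m],Y)
                - 1/2 B(Y,Z) - tr ad(nabla_Y Z)
   with B the Killing form. In a nilpotent Lie algebra ad_X and ad_X ad_Y lower the lower central
   series, hence are traceless, and the last two terms vanish. Evaluating tr (Ric o D) with this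
   formula, the Leibniz rule turns the quartic term into twice the quadratic one, so
   tr (Ric o D) = 0 for every derivation D. With Ric = lambda id + D this says
   lambda tr D + tr D^2 = 0, and then tr Ric^2 = lambda tr Ric + tr (Ric o D) = lambda tr Ric. *)

lemma bilinearI:
  fixes f :: "'a::real_vector \<Rightarrow> 'b::real_vector \<Rightarrow> 'c::real_vector"
  assumes "\<And>x y z. f (x + y) z = f x z + f y z" "\<And>c x z. f (c *\<^sub>R x) z = c *\<^sub>R f x z"
    and "\<And>x y z. f x (y + z) = f x y + f x z" "\<And>c x z. f x (c *\<^sub>R z) = c *\<^sub>R f x z"
  shows "bilinear f"
  unfolding bilinear_def by (auto intro!: linearI simp: assms)

lemma linear_eq_sum_axis:
  fixes \<phi> :: "real^'n \<Rightarrow> 'b::real_vector"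
  assumes "linear \<phi>"
  shows "\<phi> x = (\<Sum>j\<in>UNIV. x $ j *\<^sub>R \<phi> (axis j 1))"
proof -
  have "\<phi> x = \<phi> (\<Sum>j\<in>UNIV. x $ j *\<^sub>R axis j 1)"
    using basis_expansion[of x] by (simp add: scalar_mult_eq_scaleR)
  also have "\<dots> = (\<Sum>j\<in>UNIV. x $ j *\<^sub>R \<phi> (axis j 1))"
    using assms by (simp add: linear_sum linear_scale)
  finally show ?thesis .
qed

lemma linear_retraction_onto_subspace:
  fixes S :: "'a::euclidean_space set"
  assumes "subspace S"
  obtains P where "linear P" "\<And>x. P x \<in> S" "\<And>x. x \<in> S \<Longrightarrow> P x = x"
proof -
  obtain B where B: "B \<subseteq> S" "independent B" "S \<subseteq> span B"
    by (rule basis_exists)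
  obtain C where C: "B \<subseteq> C" "independent C" "UNIV \<subseteq> span C"
    by (rule maximal_independent_subset_extend[OF subset_UNIV B(2)])
  obtain P where "linear P" and P_C: "\<And>x. x \<in> C \<Longrightarrow> P x = (if x \<in> B then x else 0)"
    using linear_independent_extend[OF C(2), of "\<lambda>x. if x \<in> B then x else 0"] by blast
  have "P x = id x" if "x \<in> B" for x
    using P_C C(1) that by auto
  then have "P x = id x" if "x \<in> span B" for x
    using linear_eq_on_span[OF \<open>linear P\<close> linear_id] that by blast
  with B(3) have P_S: "P x = x" if "x \<in> S" for x
    using that by auto
  have "P ` C \<subseteq> S"
    using P_C B(1) subspace_0[OF assms] by auto
  then have "span (P ` C) \<subseteq> S"
    using assms by (rule span_minimal)
  then have "P ` span C \<subseteq> S"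
    by (simp add: span_linear_image[OF \<open>linear P\<close>])
  with C(3) have P_in: "P x \<in> S" for x
    by blast
  show thesis
    by (rule that[OF \<open>linear P\<close> P_in P_S])
qed

lemma tr_eq_trace_matrix: "tr f = trace (matrix f)"
  by (simp add: tr_def trace_def matrix_def)

lemma tr_compose_commute:
  assumes "linear A" "linear B"
  shows "tr (A \<circ> B) = tr (B \<circ> A)"
proof -
  have "tr (A \<circ> B) = trace (matrix A ** matrix B)"
    by (simp add: tr_eq_trace_matrix matrix_compose assms)
  also have "\<dots> = trace (matrix B ** matrix A)"
    by (rule trace_mul_sym)
  also have "\<dots> = tr (B \<circ> A)"
    by (simp add: tr_eq_trace_matrix matrix_compose assms)
  finally show ?thesis .
qed

lemma tr_eq_0_if_lowers_filtration:
  fixes T :: "real^'n \<Rightarrow> real^'n" and V :: "nat \<Rightarrow> (real^'n) set"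
  assumes "linear T" and "\<And>k. subspace (V k)" and V_Suc: "\<And>k. V (Suc k) \<subseteq> V k"
    and "V 0 = UNIV" and "V N = {0}" and T_V: "\<And>k x. x \<in> V k \<Longrightarrow> T x \<in> V (Suc k)"
  shows "tr T = 0"
proof -
  have "\<exists>P. linear P \<and> (\<forall>x. P x \<in> V k) \<and> (\<forall>x\<in>V k. P x = x)" for k
    by (rule linear_retraction_onto_subspace[OF assms(2)]) blast
  then obtain P where P: "\<And>k. linear (P k)" "\<And>k x. P k x \<in> V k"
      "\<And>k x. x \<in> V k \<Longrightarrow> P k x = x"
    by metis
  \<comment> \<open>By cyclicity of the trace, \<open>tr (T \<circ> P k)\<close> does not depend on \<open>k\<close>.\<close>
  have step: "tr (T \<circ> P k) = tr (T \<circ> P (Suc k))" for k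
  proof -
    have "tr (T \<circ> P k) = tr (P (Suc k) \<circ> (T \<circ> P k))"
      using P T_V by (intro arg_cong[where f = tr] ext) auto
    also have "\<dots> = tr ((T \<circ> P k) \<circ> P (Suc k))"
      using P \<open>linear T\<close> by (intro tr_compose_commute linear_compose)
    also have "\<dots> = tr (T \<circ> P (Suc k))"
      using P V_Suc by (intro arg_cong[where f = tr] ext) (simp add: subset_iff)
    finally show ?thesis .
  qed
  have P_invariant: "tr (T \<circ> P 0) = tr (T \<circ> P n)" for n
  proof (induction n)
    case (Suc n)
    then show ?case
      using step[of n] by (rule trans)
  qed simp
  have "tr (T \<circ> P 0) = tr T"
    using P \<open>V 0 = UNIV\<close> by (intro arg_cong[where f = tr] ext) auto
  moreover have "tr (T \<circ> P N) = 0"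
    using P(2)[of N] \<open>V N = {0}\<close> linear_0[OF \<open>linear T\<close>] by (simp add: tr_def)
  ultimately show ?thesis
    using P_invariant[of N] by simp
qed

locale real_lie_algebra =
  fixes br :: "real^'n \<Rightarrow> real^'n \<Rightarrow> real^'n"
  assumes lie: "lie_algebra br"
begin

lemma bilinear_br: "bilinear br"
  using lie by (simp add: lie_algebra_def)

lemmas br_simps = bilinear_ladd[OF bilinear_br] bilinear_radd[OF bilinear_br]
  bilinear_lmul[OF bilinear_br] bilinear_rmul[OF bilinear_br]
  bilinear_lneg[OF bilinear_br] bilinear_rneg[OF bilinear_br]
  bilinear_lsub[OF bilinear_br] bilinear_rsub[OF bilinear_br]
  bilinear_lzero[OF bilinear_br] bilinear_rzero[OF bilinear_br]

lemma linear_br: "linear (br x)"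
  using bilinear_br by (simp add: bilinear_def)

lemma br_self: "br x x = 0"
  using lie by (simp add: lie_algebra_def)

lemma br_anticommute: "br y x = - br x y"
proof -
  have "0 = br (x + y) (x + y)"
    by (simp add: br_self)
  also have "\<dots> = br x y + br y x"
    unfolding bilinear_ladd[OF bilinear_br] bilinear_radd[OF bilinear_br] by (simp add: br_self)
  finally have "br x y + br y x = 0"
    by (rule sym)
  then show ?thesis
    by (simp add: add_eq_0_iff)
qed

lemma br_br_swap: "br (br x y) z = br z (br y x)"
proof -
  have "br (br x y) z = - br z (br x y)"
    by (rule br_anticommute)
  also have "\<dots> = br z (br y x)"
    by (simp add: br_anticommute[of y x] br_simps)
  finally show ?thesis .
qed

definition killing_form :: "real^'n \<Rightarrow> real^'n \<Rightarrow> real" where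
  "killing_form x y = tr (br x \<circ> br y)"

lemma killing_form_commute: "killing_form x y = killing_form y x"
  unfolding killing_form_def by (rule tr_compose_commute[OF linear_br linear_br])

lemma subspace_lower_central: "subspace (lower_central br k)"
  by (cases k) (simp_all add: subspace_UNIV subspace_span)

lemma lower_central_Suc_subset: "lower_central br (Suc k) \<subseteq> lower_central br k"
proof (induction k)
  case (Suc k)
  then have "{br x y | x y. y \<in> lower_central br (Suc k)}
      \<subseteq> {br x y | x y. y \<in> lower_central br k}"
    by blast
  then show ?case
    by (simp add: span_mono)
qed simp

lemma br_mem_lower_central: "y \<in> lower_central br k \<Longrightarrow> br x y \<in> lower_central br (Suc k)"
  by (auto intro: span_base)

end

locale nilpotent_real_lie_algebra = real_lie_algebra +
  assumes nilpotent: "nilpotent_lie br"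
begin

lemma tr_eq_0_if_lowers_lower_central:
  assumes "linear T" "\<And>k x. x \<in> lower_central br k \<Longrightarrow> T x \<in> lower_central br (Suc k)"
  shows "tr T = 0"
proof -
  obtain N where N: "lower_central br N = {0}"
    using nilpotent by (auto simp: nilpotent_lie_def)
  show ?thesis
    by (rule tr_eq_0_if_lowers_filtration[OF assms(1) subspace_lower_central
          lower_central_Suc_subset _ N assms(2)]) simp
qed

lemma tr_ad_eq_0: "tr (br x) = 0"
  by (rule tr_eq_0_if_lowers_lower_central[OF linear_br br_mem_lower_central])

lemma killing_form_eq_0: "killing_form x y = 0"
  unfolding killing_form_def
proof (rule tr_eq_0_if_lowers_lower_central)
  show "linear (br x \<circ> br y)"
    by (intro linear_compose linear_br)
  fix k u
  assume "u \<in> lower_central br k"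
  then have "br x (br y u) \<in> lower_central br (Suc (Suc k))"
    by (rule br_mem_lower_central[OF br_mem_lower_central])
  then show "(br x \<circ> br y) u \<in> lower_central br (Suc k)"
    unfolding comp_apply by (rule subsetD[OF lower_central_Suc_subset])
qed

end

locale nondegenerate_form =
  fixes g :: "real^'n \<Rightarrow> real^'n \<Rightarrow> real"
  assumes metric: "metric g"
begin

lemma bilinear_g: "bilinear g"
  using metric by (simp add: metric_def)

lemma g_commute: "g x y = g y x"
  using metric by (simp add: metric_def)

lemmas g_simps = bilinear_ladd[OF bilinear_g] bilinear_radd[OF bilinear_g]
  bilinear_lmul[OF bilinear_g] bilinear_rmul[OF bilinear_g]
  bilinear_lneg[OF bilinear_g] bilinear_rneg[OF bilinear_g]
  bilinear_lsub[OF bilinear_g] bilinear_rsub[OF bilinear_g]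
  bilinear_lzero[OF bilinear_g] bilinear_rzero[OF bilinear_g]

lemma linear_g: "linear (g x)"
  using bilinear_g by (simp add: bilinear_def)

lemma g_eqI: "(\<And>z. g u z = g v z) \<Longrightarrow> u = v"
proof -
  assume "\<And>z. g u z = g v z"
  then have "\<forall>z. g (u - v) z = 0"
    by (simp add: g_simps)
  with metric show "u = v"
    unfolding metric_def by (metis eq_iff_diff_eq_0)
qed

lemma ex1_g_representation:
  assumes "linear \<phi>"
  shows "\<exists>!v. \<forall>z. g v z = \<phi> z"
proof -
  define \<Phi> where "\<Phi> v = (\<chi> j. g v (axis j 1))" for v
  have "linear \<Phi>"
    unfolding \<Phi>_def by (rule linearI) (simp_all add: vec_eq_iff g_simps)
  moreover have "inj \<Phi>"
  proof (rule injI)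
    fix u v
    assume "\<Phi> u = \<Phi> v"
    then have "g u (axis j 1) = g v (axis j 1)" for j
      by (simp add: \<Phi>_def vec_eq_iff)
    then show "u = v"
      by (intro g_eqI) (subst (1 2) linear_eq_sum_axis[OF linear_g], simp)
  qed
  ultimately have "surj \<Phi>"
    by (rule linear_inj_imp_surj)
  then obtain v where "\<Phi> v = (\<chi> j. \<phi> (axis j 1))"
    by (metis surjD)
  then have "g v (axis j 1) = \<phi> (axis j 1)" for j
    by (simp add: \<Phi>_def vec_eq_iff)
  then have "g v z = \<phi> z" for z
    by (simp add: linear_eq_sum_axis[OF linear_g, of v z] linear_eq_sum_axis[OF assms, of z])
  then show ?thesis
    by (intro ex1I[of _ v]) (simp_all add: g_eqI)
qed

lemma g_the_representation:
  assumes "linear \<phi>"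
  shows "g (THE v. \<forall>z. g v z = \<phi> z) z = \<phi> z"
  using theI'[OF ex1_g_representation[OF assms]] by blast

abbreviation e :: "'n \<Rightarrow> real^'n" where
  "e i \<equiv> axis i 1"

definition dual :: "'n \<Rightarrow> real^'n" where
  "dual i = (THE v. \<forall>z. g v z = z $ i)"

lemma g_dual: "g (dual i) z = z $ i"
  unfolding dual_def by (rule g_the_representation) (rule linearI; simp)

lemma g_dual_right: "g z (dual i) = z $ i"
  using g_dual g_commute by metis

lemma tr_eq_sum_dual: "tr h = (\<Sum>i\<in>UNIV. g (h (e i)) (dual i))"
  by (simp add: tr_def g_dual_right)

lemma sum_dual_right:
  assumes "linear \<phi>"
  shows "(\<Sum>i\<in>UNIV. g x (dual i) * \<phi> (e i)) = \<phi> x"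
  using linear_eq_sum_axis[OF assms, of x] by (simp add: g_dual_right)

lemma dual_component_commute: "dual i $ j = dual j $ i"
  using g_dual[of i "dual j"] g_dual[of j "dual i"] g_commute by metis

lemma sum_axis_dual_swap:
  assumes "bilinear B"
  shows "(\<Sum>i\<in>UNIV. B (e i) (dual i)) = (\<Sum>i\<in>UNIV. B (dual i) (e i) :: real)"
proof -
  have lin_right: "linear (B u)" and lin_left: "linear (\<lambda>x. B x u)" for u
    using assms by (simp_all add: bilinear_def)
  have expand_right: "B (e i) (dual i) = (\<Sum>j\<in>UNIV. dual i $ j * B (e i) (e j))" for i
    using linear_eq_sum_axis[OF lin_right[of "e i"], of "dual i"] by simp
  have expand_left: "B (dual j) (e j) = (\<Sum>i\<in>UNIV. dual j $ i * B (e i) (e j))" for j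
    using linear_eq_sum_axis[OF lin_left[of "e j"], of "dual j"] by simp
  have "(\<Sum>i\<in>UNIV. B (e i) (dual i)) = (\<Sum>i\<in>UNIV. \<Sum>j\<in>UNIV. dual i $ j * B (e i) (e j))"
    by (simp only: expand_right)
  also have "\<dots> = (\<Sum>j\<in>UNIV. \<Sum>i\<in>UNIV. dual j $ i * B (e i) (e j))"
    by (subst sum.swap) (simp add: dual_component_commute)
  also have "\<dots> = (\<Sum>j\<in>UNIV. B (dual j) (e j))"
    by (simp only: expand_left)
  finally show ?thesis .
qed

lemma sum_dual_left:
  assumes "linear \<phi>"
  shows "(\<Sum>i\<in>UNIV. g x (e i) * \<phi> (dual i)) = \<phi> x"
proof -
  have "bilinear (\<lambda>u v. g x u * \<phi> v)"
    unfolding bilinear_def using linear_g assms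
    by (auto intro!: linearI simp: linear_add linear_scale algebra_simps)
  then have "(\<Sum>i\<in>UNIV. g x (e i) * \<phi> (dual i)) = (\<Sum>i\<in>UNIV. g x (dual i) * \<phi> (e i))"
    by (rule sum_axis_dual_swap)
  also have "\<dots> = \<phi> x"
    by (rule sum_dual_right[OF assms])
  finally show ?thesis .
qed

end

locale metric_lie_algebra = nondegenerate_form g + real_lie_algebra br
  for g :: "real^'n \<Rightarrow> real^'n \<Rightarrow> real" and br :: "real^'n \<Rightarrow> real^'n \<Rightarrow> real^'n"
begin

abbreviation nabla :: "real^'n \<Rightarrow> real^'n \<Rightarrow> real^'n" where
  "nabla \<equiv> levi_civita br g"

definition koszul :: "real^'n \<Rightarrow> real^'n \<Rightarrow> real^'n \<Rightarrow> real" where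
  "koszul X Y Z = (g (br X Y) Z - g (br Y Z) X + g (br Z X) Y) / 2"

lemma linear_koszul: "linear (koszul X Y)"
  unfolding koszul_def by (rule linearI) (simp_all add: g_simps br_simps field_simps)

lemma linear_koszul_left: "linear (\<lambda>X. koszul X Y Z)"
  unfolding koszul_def by (rule linearI) (simp_all add: g_simps br_simps field_simps)

lemma g_nabla: "g (nabla X Y) Z = koszul X Y Z"
proof -
  have "nabla X Y = (THE v. \<forall>Z. g v Z = koszul X Y Z)"
    by (simp add: levi_civita_def koszul_def)
  then show ?thesis
    using g_the_representation[OF linear_koszul] by simp
qed

lemma koszul_antisym: "koszul X Y Z = - koszul X Z Y"
  unfolding koszul_def
  by (simp add: br_anticommute[of Z X] br_anticommute[of Y X] br_anticommute[of Z Y] g_simps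
      g_commute[of "br X Y" Z] g_commute[of "br X Z" Y] g_commute[of "br Y Z" X] field_simps)

lemma g_br_br_anticommute: "g (br a b) (br c d) = g (br b a) (br d c)"
  by (simp add: br_anticommute[of b a] br_anticommute[of d c] g_simps)

lemma g_curvature:
  "g (curvature br g X Y Z) W = koszul X (nabla Y Z) W - koszul Y (nabla X Z) W - koszul (br X Y) Z W"
  unfolding curvature_def Let_def by (simp add: g_simps g_nabla)

lemma sum_koszul_axis_dual: "(\<Sum>k\<in>UNIV. koszul (e k) V (dual k)) = - tr (br V)"
proof -
  have "(\<Sum>k\<in>UNIV. g (br (e k) V) (dual k)) = - tr (br V)"
    by (simp add: tr_eq_sum_dual br_anticommute[of "e k" V for k] g_simps sum_negf)
  moreover have "(\<Sum>k\<in>UNIV. g (br V (dual k)) (e k)) = tr (br V)"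
    unfolding tr_eq_sum_dual
    by (rule sum_axis_dual_swap[where B = "\<lambda>u v. g (br V v) u"])
      (rule bilinearI; simp add: g_simps br_simps)
  moreover have "(\<Sum>k\<in>UNIV. g (br (dual k) (e k)) V) = 0"
  proof -
    have "(\<Sum>k\<in>UNIV. g (br (dual k) (e k)) V) = (\<Sum>k\<in>UNIV. g (br (e k) (dual k)) V)"
      by (rule sum_axis_dual_swap[where B = "\<lambda>u v. g (br v u) V"])
        (rule bilinearI; simp add: g_simps br_simps)
    then show ?thesis
      by (simp add: br_anticommute[of "e k" "dual k" for k] g_simps sum_negf)
  qed
  ultimately show ?thesis
    unfolding koszul_def by (simp only: sum_divide_distrib[symmetric] sum.distrib sum_subtractf) simp
qed

lemma ricci_tensor_expand:
  "ricci_tensor br g Y Z = - tr (br (nabla Y Z)) + (\<Sum>k\<in>UNIV. g (nabla Y (dual k)) (nabla (e k) Z))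
     - (\<Sum>k\<in>UNIV. koszul (br (e k) Y) Z (dual k))"
proof -
  have "ricci_tensor br g Y Z = (\<Sum>k\<in>UNIV. g (curvature br g (e k) Y Z) (dual k))"
    by (simp add: ricci_tensor_def tr_eq_sum_dual)
  also have "\<dots> = (\<Sum>k\<in>UNIV. koszul (e k) (nabla Y Z) (dual k) + g (nabla Y (dual k)) (nabla (e k) Z)
      - koszul (br (e k) Y) Z (dual k))"
  proof (intro sum.cong refl)
    fix k
    have "koszul Y (nabla (e k) Z) (dual k) = - g (nabla Y (dual k)) (nabla (e k) Z)"
      by (simp add: koszul_antisym[of Y "nabla (e k) Z"] g_nabla)
    then show "g (curvature br g (e k) Y Z) (dual k) = koszul (e k) (nabla Y Z) (dual k)
        + g (nabla Y (dual k)) (nabla (e k) Z) - koszul (br (e k) Y) Z (dual k)"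
      by (simp add: g_curvature)
  qed
  also have "\<dots> = - tr (br (nabla Y Z)) + (\<Sum>k\<in>UNIV. g (nabla Y (dual k)) (nabla (e k) Z))
      - (\<Sum>k\<in>UNIV. koszul (br (e k) Y) Z (dual k))"
    by (simp add: sum.distrib sum_subtractf sum_koszul_axis_dual)
  finally show ?thesis .
qed

lemma sum_g_nabla_dual:
  "(\<Sum>k\<in>UNIV. g (nabla Y (dual k)) (nabla (e k) Z)) =
     ((\<Sum>k\<in>UNIV. koszul (e k) Z (br Y (dual k))) + (\<Sum>k\<in>UNIV. koszul (br (e k) Y) Z (dual k))
      - (\<Sum>k\<in>UNIV. \<Sum>m\<in>UNIV. koszul (e k) Z (dual m) * g (br (dual k) (e m)) Y)) / 2"
proof -
  have summand: "g (nabla Y (dual k)) (nabla (e k) Z) =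
      ((\<Sum>m\<in>UNIV. g (br Y (dual k)) (e m) * koszul (e k) Z (dual m))
       + (\<Sum>m\<in>UNIV. g (br (e m) Y) (dual k) * koszul (e k) Z (dual m))
       - (\<Sum>m\<in>UNIV. koszul (e k) Z (dual m) * g (br (dual k) (e m)) Y)) / 2" for k
  proof -
    have "g (nabla Y (dual k)) (nabla (e k) Z) = koszul (e k) Z (nabla Y (dual k))"
      by (subst g_commute) (rule g_nabla)
    also have "\<dots> = (\<Sum>m\<in>UNIV. g (nabla Y (dual k)) (e m) * koszul (e k) Z (dual m))"
      by (rule sum_dual_left[OF linear_koszul, symmetric])
    also have "\<dots> = (\<Sum>m\<in>UNIV. (g (br Y (dual k)) (e m) * koszul (e k) Z (dual m)
        + g (br (e m) Y) (dual k) * koszul (e k) Z (dual m)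
        - koszul (e k) Z (dual m) * g (br (dual k) (e m)) Y) / 2)"
      by (intro sum.cong refl) (simp add: g_nabla koszul_def[of Y] field_simps)
    finally show ?thesis
      by (simp add: sum_divide_distrib[symmetric] sum.distrib sum_subtractf)
  qed
  have "(\<Sum>k\<in>UNIV. g (nabla Y (dual k)) (nabla (e k) Z)) =
      ((\<Sum>k\<in>UNIV. \<Sum>m\<in>UNIV. g (br Y (dual k)) (e m) * koszul (e k) Z (dual m))
       + (\<Sum>k\<in>UNIV. \<Sum>m\<in>UNIV. g (br (e m) Y) (dual k) * koszul (e k) Z (dual m))
       - (\<Sum>k\<in>UNIV. \<Sum>m\<in>UNIV. koszul (e k) Z (dual m) * g (br (dual k) (e m)) Y)) / 2"
    by (simp only: summand sum_divide_distrib[symmetric] sum.distrib sum_subtractf)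
  moreover have "(\<Sum>k\<in>UNIV. \<Sum>m\<in>UNIV. g (br Y (dual k)) (e m) * koszul (e k) Z (dual m))
      = (\<Sum>k\<in>UNIV. koszul (e k) Z (br Y (dual k)))"
    by (simp add: sum_dual_left[OF linear_koszul])
  moreover have "(\<Sum>k\<in>UNIV. \<Sum>m\<in>UNIV. g (br (e m) Y) (dual k) * koszul (e k) Z (dual m))
      = (\<Sum>m\<in>UNIV. koszul (br (e m) Y) Z (dual m))"
    by (subst sum.swap) (simp add: sum_dual_right[OF linear_koszul_left])
  ultimately show ?thesis
    by simp
qed

lemma sum_koszul_br_dual:
  "(\<Sum>k\<in>UNIV. koszul (e k) Z (br Y (dual k))) =
     ((\<Sum>k\<in>UNIV. g (br Z (dual k)) (br (e k) Y)) - killing_form Z Y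
      + (\<Sum>k\<in>UNIV. g (br (dual k) (br (e k) Y)) Z)) / 2"
proof -
  have "(\<Sum>k\<in>UNIV. g (br (e k) Z) (br Y (dual k))) = (\<Sum>k\<in>UNIV. g (br (dual k) Z) (br Y (e k)))"
    by (rule sum_axis_dual_swap[where B = "\<lambda>u v. g (br u Z) (br Y v)"])
      (rule bilinearI; simp add: g_simps br_simps)
  also have "\<dots> = (\<Sum>k\<in>UNIV. g (br Z (dual k)) (br (e k) Y))"
    by (simp add: br_anticommute[of "dual k" Z for k] br_anticommute[of Y "e k" for k] g_simps)
  finally have P: "(\<Sum>k\<in>UNIV. g (br (e k) Z) (br Y (dual k)))
      = (\<Sum>k\<in>UNIV. g (br Z (dual k)) (br (e k) Y))" .
  have "(\<Sum>k\<in>UNIV. g (br Z (br Y (dual k))) (e k)) = (\<Sum>k\<in>UNIV. g (br Z (br Y (e k))) (dual k))"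
    by (rule sum_axis_dual_swap[where B = "\<lambda>u v. g (br Z (br Y v)) u"])
      (rule bilinearI; simp add: g_simps br_simps)
  then have K: "(\<Sum>k\<in>UNIV. g (br Z (br Y (dual k))) (e k)) = killing_form Z Y"
    by (simp add: killing_form_def tr_eq_sum_dual)
  have "(\<Sum>k\<in>UNIV. g (br (br Y (dual k)) (e k)) Z) = (\<Sum>k\<in>UNIV. g (br (br Y (e k)) (dual k)) Z)"
    by (rule sum_axis_dual_swap[where B = "\<lambda>u v. g (br (br Y v) u) Z"])
      (rule bilinearI; simp add: g_simps br_simps)
  also have "\<dots> = (\<Sum>k\<in>UNIV. g (br (dual k) (br (e k) Y)) Z)"
    by (simp only: br_br_swap)
  finally have Q: "(\<Sum>k\<in>UNIV. g (br (br Y (dual k)) (e k)) Z)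
      = (\<Sum>k\<in>UNIV. g (br (dual k) (br (e k) Y)) Z)" .
  show ?thesis
    unfolding koszul_def by (simp only: sum_divide_distrib[symmetric] sum.distrib sum_subtractf P K Q)
qed

lemma sum_koszul_br_axis:
  "(\<Sum>k\<in>UNIV. koszul (br (e k) Y) Z (dual k)) =
     (killing_form Z Y - (\<Sum>k\<in>UNIV. g (br Z (dual k)) (br (e k) Y))
      + (\<Sum>k\<in>UNIV. g (br (dual k) (br (e k) Y)) Z)) / 2"
proof -
  have K: "(\<Sum>k\<in>UNIV. g (br (br (e k) Y) Z) (dual k)) = killing_form Z Y"
    unfolding killing_form_def tr_eq_sum_dual by (simp only: br_br_swap comp_apply)
  show ?thesis
    unfolding koszul_def by (simp only: sum_divide_distrib[symmetric] sum.distrib sum_subtractf K)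
qed

lemma sum_koszul_quartic:
  "(\<Sum>k\<in>UNIV. \<Sum>m\<in>UNIV. koszul (e k) Z (dual m) * g (br (dual k) (e m)) Y) =
     (\<Sum>k\<in>UNIV. \<Sum>m\<in>UNIV. g (br (dual m) (e k)) Z * g (br (dual k) (e m)) Y) / 2"
proof -
  have summand: "koszul (e k) Z (dual m) * g (br (dual k) (e m)) Y =
      (g (br (e k) Z) (dual m) * g (br (dual k) (e m)) Y - g (br Z (dual m)) (e k) * g (br (dual k) (e m)) Y
       + g (br (dual m) (e k)) Z * g (br (dual k) (e m)) Y) / 2" for k m
    by (simp add: koszul_def field_simps)
  have lin_dual_br: "linear (\<lambda>u. g (br (dual k) u) Y)"
    and lin_br_axis: "linear (\<lambda>u. g (br u (e m)) Y)" for k m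
    by (rule linearI; simp add: g_simps br_simps)+
  have "(\<Sum>k\<in>UNIV. \<Sum>m\<in>UNIV. koszul (e k) Z (dual m) * g (br (dual k) (e m)) Y) =
      ((\<Sum>k\<in>UNIV. \<Sum>m\<in>UNIV. g (br (e k) Z) (dual m) * g (br (dual k) (e m)) Y)
       - (\<Sum>k\<in>UNIV. \<Sum>m\<in>UNIV. g (br Z (dual m)) (e k) * g (br (dual k) (e m)) Y)
       + (\<Sum>k\<in>UNIV. \<Sum>m\<in>UNIV. g (br (dual m) (e k)) Z * g (br (dual k) (e m)) Y)) / 2"
    by (simp only: summand sum_divide_distrib[symmetric] sum.distrib sum_subtractf)
  moreover have "(\<Sum>k\<in>UNIV. \<Sum>m\<in>UNIV. g (br (e k) Z) (dual m) * g (br (dual k) (e m)) Y)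
      = (\<Sum>k\<in>UNIV. g (br (dual k) (br (e k) Z)) Y)"
    by (rule sum.cong[OF refl]) (rule sum_dual_right[OF lin_dual_br])
  moreover have "(\<Sum>k\<in>UNIV. \<Sum>m\<in>UNIV. g (br Z (dual m)) (e k) * g (br (dual k) (e m)) Y)
      = (\<Sum>k\<in>UNIV. g (br (dual k) (br (e k) Z)) Y)"
  proof -
    have "(\<Sum>k\<in>UNIV. \<Sum>m\<in>UNIV. g (br Z (dual m)) (e k) * g (br (dual k) (e m)) Y)
        = (\<Sum>m\<in>UNIV. \<Sum>k\<in>UNIV. g (br Z (dual m)) (e k) * g (br (dual k) (e m)) Y)"
      by (rule sum.swap)
    also have "\<dots> = (\<Sum>m\<in>UNIV. g (br (br Z (dual m)) (e m)) Y)"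
      by (rule sum.cong[OF refl]) (rule sum_dual_left[OF lin_br_axis])
    also have "\<dots> = (\<Sum>k\<in>UNIV. g (br (br Z (e k)) (dual k)) Y)"
      by (rule sum_axis_dual_swap[where B = "\<lambda>u v. g (br (br Z v) u) Y"])
        (rule bilinearI; simp add: g_simps br_simps)
    also have "\<dots> = (\<Sum>k\<in>UNIV. g (br (dual k) (br (e k) Z)) Y)"
      by (simp only: br_br_swap)
    finally show ?thesis .
  qed
  ultimately show ?thesis
    by simp
qed

lemma ricci_tensor_eq:
  "ricci_tensor br g Y Z =
     (\<Sum>k\<in>UNIV. g (br Z (dual k)) (br (e k) Y)) / 2
     - (\<Sum>k\<in>UNIV. \<Sum>m\<in>UNIV. g (br (dual m) (e k)) Z * g (br (dual k) (e m)) Y) / 4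
     - killing_form Y Z / 2 - tr (br (nabla Y Z))"
  unfolding ricci_tensor_expand sum_g_nabla_dual sum_koszul_br_dual sum_koszul_br_axis
    sum_koszul_quartic killing_form_commute[of Z Y]
  by (simp add: field_simps)

end

locale nilpotent_metric_lie_algebra = metric_lie_algebra g br + nilpotent_real_lie_algebra br
  for g :: "real^'n \<Rightarrow> real^'n \<Rightarrow> real" and br :: "real^'n \<Rightarrow> real^'n \<Rightarrow> real^'n"
begin

lemma ricci_tensor_nilpotent:
  "ricci_tensor br g Y Z =
     (\<Sum>k\<in>UNIV. g (br Z (dual k)) (br (e k) Y)) / 2
     - (\<Sum>k\<in>UNIV. \<Sum>m\<in>UNIV. g (br (dual m) (e k)) Z * g (br (dual k) (e m)) Y) / 4"
  by (simp add: ricci_tensor_eq killing_form_eq_0 tr_ad_eq_0)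

lemma g_ricci_operator: "g (ricci_operator br g Y) Z = ricci_tensor br g Y Z"
proof -
  have "linear (\<lambda>Z. ricci_tensor br g Y Z)"
    unfolding ricci_tensor_nilpotent
    by (rule linearI) (simp_all add: g_simps br_simps sum.distrib sum_distrib_left algebra_simps
        add_divide_distrib diff_divide_distrib)
  then show ?thesis
    unfolding ricci_operator_def by (rule g_the_representation)
qed

lemma sum_g_br_derivation:
  assumes "derivation br D"
  shows "(\<Sum>k\<in>UNIV. \<Sum>m\<in>UNIV. g (br (dual k) (e m)) (D (br (dual m) (e k))))
    = 2 * (\<Sum>i\<in>UNIV. \<Sum>k\<in>UNIV. g (br (dual i) (dual k)) (br (e k) (D (e i))))"
proof -
  have "linear D" and D_br: "D (br x y) = br (D x) y + br x (D y)" for x y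
    using assms by (simp_all add: derivation_def)
  have "(\<Sum>k\<in>UNIV. \<Sum>m\<in>UNIV. g (br (dual k) (e m)) (D (br (dual m) (e k))))
      = (\<Sum>k\<in>UNIV. \<Sum>m\<in>UNIV. g (br (dual k) (e m)) (br (D (dual m)) (e k)))
      + (\<Sum>k\<in>UNIV. \<Sum>m\<in>UNIV. g (br (dual k) (e m)) (br (dual m) (D (e k))))"
    by (simp add: D_br g_simps sum.distrib)
  also have "(\<Sum>k\<in>UNIV. \<Sum>m\<in>UNIV. g (br (dual k) (e m)) (br (D (dual m)) (e k)))
      = (\<Sum>k\<in>UNIV. \<Sum>m\<in>UNIV. g (br (dual k) (dual m)) (br (D (e m)) (e k)))"
    using \<open>linear D\<close>
    by (intro sum.cong refl
        sum_axis_dual_swap[where B = "\<lambda>u v. g (br (dual k) u) (br (D v) (e k))" for k])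
      (rule bilinearI; simp add: g_simps br_simps linear_add linear_scale)
  also have "\<dots> = (\<Sum>i\<in>UNIV. \<Sum>k\<in>UNIV. g (br (dual i) (dual k)) (br (e k) (D (e i))))"
    by (subst sum.swap) (intro sum.cong refl g_br_br_anticommute)
  also have "(\<Sum>k\<in>UNIV. \<Sum>m\<in>UNIV. g (br (dual k) (e m)) (br (dual m) (D (e k))))
      = (\<Sum>i\<in>UNIV. \<Sum>k\<in>UNIV. g (br (dual i) (dual k)) (br (e k) (D (e i))))"
    by (intro sum.cong refl
        sum_axis_dual_swap[where B = "\<lambda>u v. g (br (dual k) u) (br v (D (e k)))" for k])
      (rule bilinearI; simp add: g_simps br_simps)
  finally show ?thesis
    by simp
qed

lemma tr_ricci_operator_comp_derivation:
  assumes "derivation br D"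
  shows "tr (ricci_operator br g \<circ> D) = 0"
proof -
  define A where "A = (\<Sum>i\<in>UNIV. \<Sum>k\<in>UNIV. g (br (dual i) (dual k)) (br (e k) (D (e i))))"
  have "tr (ricci_operator br g \<circ> D) = (\<Sum>i\<in>UNIV. ricci_tensor br g (D (e i)) (dual i))"
    by (simp add: tr_eq_sum_dual g_ricci_operator)
  also have "\<dots> = A / 2 - (\<Sum>i\<in>UNIV. \<Sum>k\<in>UNIV. \<Sum>m\<in>UNIV.
      g (br (dual m) (e k)) (dual i) * g (br (dual k) (e m)) (D (e i))) / 4"
    unfolding ricci_tensor_nilpotent A_def by (simp only: sum_subtractf sum_divide_distrib)
  also have "(\<Sum>i\<in>UNIV. \<Sum>k\<in>UNIV. \<Sum>m\<in>UNIV.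
      g (br (dual m) (e k)) (dual i) * g (br (dual k) (e m)) (D (e i)))
    = (\<Sum>k\<in>UNIV. \<Sum>m\<in>UNIV. g (br (dual k) (e m)) (D (br (dual m) (e k))))"
  proof -
    have "linear D"
      using assms by (simp add: derivation_def)
    then have "linear (\<lambda>w. g (br (dual k) (e m)) (D w))" for k m
      by (intro linear_compose[unfolded o_def, OF _ linear_g])
    from sum_dual_right[OF this]
    have summand: "(\<Sum>i\<in>UNIV. g (br (dual m) (e k)) (dual i) * g (br (dual k) (e m)) (D (e i)))
        = g (br (dual k) (e m)) (D (br (dual m) (e k)))" for k m .
    have swap: "(\<Sum>i\<in>UNIV. \<Sum>k\<in>UNIV. \<Sum>m\<in>UNIV. F i k m)
        = (\<Sum>k\<in>UNIV. \<Sum>m\<in>UNIV. \<Sum>i\<in>UNIV. F i k m)"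
      for F :: "'n \<Rightarrow> 'n \<Rightarrow> 'n \<Rightarrow> real"
      by (subst sum.swap) (rule sum.cong[OF refl], rule sum.swap)
    show ?thesis
      by (subst swap) (simp only: summand)
  qed
  also have "\<dots> = 2 * A"
    unfolding A_def by (rule sum_g_br_derivation[OF assms])
  finally show ?thesis
    by (simp add: comp_def)
qed

end

theorem corollary2p2:
  fixes br :: "real^'n \<Rightarrow> real^'n \<Rightarrow> real^'n"
    and g :: "real^'n \<Rightarrow> real^'n \<Rightarrow> real"
    and D :: "real^'n \<Rightarrow> real^'n"
    and lam :: real
  assumes "lie_algebra br" and "nilpotent_lie br" and "metric g"
    and "derivation br D"
    and "\<forall>x. ricci_operator br g x = lam *\<^sub>R x + D x"
  shows "tr (D \<circ> D) = - lam * tr D \<and>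
         tr (ricci_operator br g \<circ> ricci_operator br g) = lam * tr (ricci_operator br g)"
proof -
  interpret nilpotent_metric_lie_algebra g br
    using assms(1-3) by unfold_locales
  have "linear D"
    using assms(4) by (simp add: derivation_def)
  have Ric: "ricci_operator br g x = lam *\<^sub>R x + D x" for x
    using assms(5) by blast
  have "tr (ricci_operator br g \<circ> D) = lam * tr D + tr (D \<circ> D)"
    by (simp add: tr_def Ric sum.distrib sum_distrib_left)
  moreover have "tr (ricci_operator br g \<circ> ricci_operator br g)
      = lam * tr (ricci_operator br g) + tr (ricci_operator br g \<circ> D)"
    using \<open>linear D\<close>
    by (simp add: tr_def Ric linear_add linear_scale sum.distrib sum_distrib_left algebra_simps)
  ultimately show ?thesis
    using tr_ricci_operator_comp_derivation[OF assms(4)] by simp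
qed

end
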